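(* The sheaf $\mathcal{C}_{X_{\mathrm{crs}}}$ is not soft: for the closed subset $A=\bigcup_{n\ge1}e_n^0\subset X_{\mathrm{crs}}$ with inclusion $j:A\to X_{\mathrm{crs}}$, the restriction map $H^0(X_{\mathrm{crs}},\mathcal{C}_{X_{\mathrm{crs}}})\to H^0(A,j^{-1}\mathcal{C}_{X_{\mathrm{crs}}})$ is not surjective.
   Context: Let $X$ be the following 2-dimensional CW-complex. Its 0-cells are $e_n^0$, $n\ge 0$; the point $x=e_0^0$ is called the origin. For each $n\ge1$ there are two 1-cells $e_n^1, e_{-n}^1$, each joining $x$ to $e_n^0$, so that $e_0^0\cup e_n^0\cup e_n^1\cup e_{-n}^1$ is homeomorphic to a circle; for each $n\ge1$ a 2-cell $e_n^2$ is attached via a homeomorphism $\varphi_n:S^1\to e_0^0\cup e_n^0\cup e_n^1\cup e_{-n}^1$. Thus each closed 2-cell $\overline{e_n^2}$ is a closed disk having $x$ and $e_n^0$ on its boundary, and $X$ is a wedge at $x$ of countably many closed disks, carrying the CW (weak) topology. The coarser topology on the set $X$ consists of all subsets $U\subset X$ that are open in the CW-topology and either do not contain $x$, or contain $\overline{e_n^2}\smallsetminus e_n^0$ for all but finitely many $n\ge1$. The set $X$ with this coarser topology is denoted $X_{\mathrm{crs}}$. $\mathcal{C}_{X_{\mathrm{crs}}}$ denotes the sheaf of continuous real-valued functions on $X_{\mathrm{crs}}$; $j^{-1}$ is the inverse image sheaf. *)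

theory Defs
  imports "HOL-Analysis.Analysis"
begin

text \<open>Model of X: a wedge of countably many closed disks D_n (n >= 1), each being the closed
 unit disk in the complex plane. In disk n the point -1 is glued to the origin x (= None),
 the point 1 is the 0-cell e_n^0, the two open half circles are the 1-cells e_n^1, e_{-n}^1,
 and the open disk is the 2-cell e_n^2. A point of X is None (the origin) or Some (n, z) with
 n >= 1, cmod z <= 1, z \<noteq> -1.\<close>

type_synonym xpt = "(nat \<times> complex) option"

definition Xpts :: "xpt set" where
  "Xpts = insert None {Some (n, z) | n z. n \<ge> 1 \<and> z \<in> cball 0 1 \<and> z \<noteq> -1}"

definition qmap :: "nat \<Rightarrow> complex \<Rightarrow> xpt" where
  "qmap n z = (if z = -1 then None else Some (n, z))"

definition vert :: "nat \<Rightarrow> xpt" where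
  "vert n = Some (n, 1)"

definition cw_open :: "xpt set \<Rightarrow> bool" where
  "cw_open U \<longleftrightarrow> U \<subseteq> Xpts \<and>
     (\<forall>n\<ge>1. openin (top_of_set (cball (0::complex) 1)) {z \<in> cball 0 1. qmap n z \<in> U})"

definition crs_open :: "xpt set \<Rightarrow> bool" where
  "crs_open U \<longleftrightarrow> cw_open U \<and>
     (None \<notin> U \<or> finite {n. n \<ge> 1 \<and> \<not> (qmap n ` (cball 0 1 - {1}) \<subseteq> U)})"

definition Xcrs :: "xpt topology" where
  "Xcrs = topology crs_open"

definition same_germ :: "'a topology \<Rightarrow> 'a \<Rightarrow> ('a \<Rightarrow> real) \<Rightarrow> ('a \<Rightarrow> real) \<Rightarrow> bool" where
  "same_germ T p f g \<longleftrightarrow> (\<exists>V. openin T V \<and> p \<in> V \<and> (\<forall>y\<in>V. f y = g y))"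

text \<open>Sections over A of the inverse image sheaf j^{-1} C_T (via the etale space):
 a germ (given by a representative) of a continuous function at every point of A,
 locally induced by a continuous function on an open set of T.\<close>
definition inv_image_section :: "'a topology \<Rightarrow> 'a set \<Rightarrow> ('a \<Rightarrow> 'a \<Rightarrow> real) \<Rightarrow> bool" where
  "inv_image_section T A \<sigma> \<longleftrightarrow>
     (\<forall>a\<in>A. \<exists>U g. openin T U \<and> a \<in> U \<and> continuous_map (subtopology T U) euclideanreal g \<and>
        (\<forall>b\<in>U \<inter> A. same_germ T b (\<sigma> b) g))"

definition restriction_of_global :: "'a topology \<Rightarrow> 'a set \<Rightarrow> ('a \<Rightarrow> 'a \<Rightarrow> real) \<Rightarrow> bool" where
  "restriction_of_global T A \<sigma> \<longleftrightarrow>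
     (\<exists>f. continuous_map T euclideanreal f \<and> (\<forall>a\<in>A. same_germ T a f (\<sigma> a)))"

end

theory Submission
  imports Defs
begin

text \<open>Near e_n^0 the space looks like the n-th disk alone, so the germ of the constant n at
 e_n^0 defines a section over the closed set of vertices. A global continuous f extending it
 would satisfy f(e_n^0) = n, but f is nearly constant on a coarse neighbourhood of the origin,
 which contains all but finitely many disks minus their vertices; by continuity on the n-th
 disk, f(e_n^0) lies in the closure of those values, so f(e_n^0) stays bounded.\<close>

definition missed_disks :: "xpt set \<Rightarrow> nat set" where
  "missed_disks U = {n. n \<ge> 1 \<and> \<not> qmap n ` (cball 0 1 - {1}) \<subseteq> U}"

lemma crs_open_iff: "crs_open U \<longleftrightarrow> cw_open U \<and> (None \<in> U \<longrightarrow> finite (missed_disks U))"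
  unfolding crs_open_def missed_disks_def by blast

lemma cw_open_Int: "cw_open S \<Longrightarrow> cw_open T \<Longrightarrow> cw_open (S \<inter> T)"
proof -
  assume S: "cw_open S" and T: "cw_open T"
  have "{z \<in> cball 0 1. qmap n z \<in> S \<inter> T} =
        {z \<in> cball 0 1. qmap n z \<in> S} \<inter> {z \<in> cball 0 1. qmap n z \<in> T}" for n
    by auto
  with S T show ?thesis unfolding cw_open_def by (auto intro: openin_Int)
qed

lemma cw_open_Union: "(\<And>K. K \<in> KK \<Longrightarrow> cw_open K) \<Longrightarrow> cw_open (\<Union>KK)"
proof -
  assume "\<And>K. K \<in> KK \<Longrightarrow> cw_open K"
  moreover have "{z \<in> cball 0 1. qmap n z \<in> \<Union>KK} = (\<Union>K\<in>KK. {z \<in> cball 0 1. qmap n z \<in> K})" for n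
    by auto
  ultimately show ?thesis unfolding cw_open_def by (auto intro!: openin_Union)
qed

lemma missed_disks_Int: "missed_disks (S \<inter> T) \<subseteq> missed_disks S \<union> missed_disks T"
  unfolding missed_disks_def by auto

lemma missed_disks_Union: "K \<in> KK \<Longrightarrow> missed_disks (\<Union>KK) \<subseteq> missed_disks K"
  unfolding missed_disks_def by auto

lemma istopology_crs_open: "istopology crs_open"
  unfolding istopology_def
proof (intro conjI allI impI)
  fix S T assume "crs_open S" "crs_open T"
  then show "crs_open (S \<inter> T)"
    using cw_open_Int missed_disks_Int unfolding crs_open_iff by (meson IntD1 IntD2 finite_UnI finite_subset)
next
  fix KK assume "\<forall>K\<in>KK. crs_open K"
  then show "crs_open (\<Union>KK)"
    using cw_open_Union missed_disks_Union unfolding crs_open_iff by (metis UnionE finite_subset)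
qed

lemma openin_Xcrs: "openin Xcrs = crs_open"
  unfolding Xcrs_def using istopology_crs_open by simp

lemma qmap_in_Xpts: "n \<ge> 1 \<Longrightarrow> z \<in> cball 0 1 \<Longrightarrow> qmap n z \<in> Xpts"
  unfolding qmap_def Xpts_def by auto

lemma qmap_eq_vert: "qmap m z = vert k \<longleftrightarrow> m = k \<and> z = 1"
  unfolding qmap_def vert_def by auto

lemma topspace_Xcrs: "topspace Xcrs = Xpts"
proof -
  have "{z \<in> cball 0 1. qmap n z \<in> Xpts} = cball 0 1" if "n \<ge> 1" for n
    using that qmap_in_Xpts by auto
  then have "cw_open Xpts"
    unfolding cw_open_def by simp
  moreover have "missed_disks Xpts = {}"
    unfolding missed_disks_def using qmap_in_Xpts by auto
  ultimately have "openin Xcrs Xpts"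
    unfolding openin_Xcrs crs_open_iff by simp
  then show ?thesis
    unfolding topspace_def openin_Xcrs crs_open_def cw_open_def by auto
qed

lemma continuous_map_qmap: "n \<ge> 1 \<Longrightarrow> continuous_map (top_of_set (cball 0 1)) Xcrs (qmap n)"
  unfolding continuous_map_def topspace_Xcrs openin_Xcrs
  by (auto simp: qmap_in_Xpts crs_open_def cw_open_def)

lemma closedin_vertices: "closedin Xcrs (vert ` {1..})"
proof -
  have "{z \<in> cball 0 1. qmap n z \<in> Xpts - vert ` {1..}} = cball 0 1 \<inter> - {1}" if "n \<ge> 1" for n
    using that qmap_in_Xpts qmap_eq_vert by fastforce
  then have "cw_open (Xpts - vert ` {1..})"
    unfolding cw_open_def by (auto simp: open_Compl)
  moreover have "missed_disks (Xpts - vert ` {1..}) = {}"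
    unfolding missed_disks_def using qmap_in_Xpts qmap_eq_vert by fastforce
  moreover have "vert ` {1..} \<subseteq> Xpts"
    unfolding vert_def Xpts_def by auto
  ultimately show ?thesis
    unfolding closedin_def topspace_Xcrs openin_Xcrs crs_open_iff by simp
qed

definition half_disk :: "nat \<Rightarrow> xpt set" where
  "half_disk n = {Some (n, z) | z. z \<in> cball 0 1 \<and> Re z > 0}"

lemma openin_half_disk: "n \<ge> 1 \<Longrightarrow> openin Xcrs (half_disk n)"
proof -
  assume n: "n \<ge> 1"
  have "{z \<in> cball 0 1. qmap m z \<in> half_disk n} = (if m = n then cball 0 1 \<inter> {z. Re z > 0} else {})" for m
    unfolding half_disk_def qmap_def by auto
  then have "cw_open (half_disk n)"
    unfolding cw_open_def using n by (auto simp: half_disk_def Xpts_def open_halfspace_Re_gt)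
  moreover have "None \<notin> half_disk n"
    unfolding half_disk_def by auto
  ultimately show ?thesis
    unfolding openin_Xcrs crs_open_iff by simp
qed

lemma half_disk_Int_vertices: "half_disk n \<inter> vert ` {1..} \<subseteq> {vert n}"
  unfolding vert_def half_disk_def by auto

lemma vert_in_half_disk: "vert n \<in> half_disk n"
  unfolding vert_def half_disk_def by auto

definition index_section :: "xpt \<Rightarrow> xpt \<Rightarrow> real" where
  "index_section b = (\<lambda>y. real (fst (the b)))"

lemma inv_image_section_index: "inv_image_section Xcrs (vert ` {1..}) index_section"
  unfolding inv_image_section_def
proof
  fix a assume "a \<in> vert ` {1..}"
  then obtain n where n: "n \<ge> 1" "a = vert n" by auto
  have "same_germ Xcrs b (index_section b) (\<lambda>y. real n)" if "b \<in> half_disk n \<inter> vert ` {1..}" for b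
  proof -
    have "b = vert n"
      using that half_disk_Int_vertices by blast
    then show ?thesis
      using openin_half_disk[OF n(1)] vert_in_half_disk
      unfolding same_germ_def index_section_def by (auto simp: vert_def)
  qed
  with n show "\<exists>U g. openin Xcrs U \<and> a \<in> U \<and> continuous_map (subtopology Xcrs U) euclideanreal g \<and>
        (\<forall>b\<in>U \<inter> vert ` {1..}. same_germ Xcrs b (index_section b) g)"
    by (intro exI[of _ "half_disk n"] exI[of _ "\<lambda>y. real n"]) (auto simp: openin_half_disk vert_in_half_disk)
qed

lemma eventually_disks_in_nbhd_origin:
  assumes "openin Xcrs U" "None \<in> U"
  shows "\<forall>\<^sub>F n in sequentially. qmap n ` (cball 0 1 - {1}) \<subseteq> U"
proof -
  have "finite (missed_disks U)"
    using assms unfolding openin_Xcrs crs_open_iff by blast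
  then obtain N where N: "\<forall>n\<in>missed_disks U. n \<le> N"
    using finite_nat_set_iff_bounded_le by blast
  have "qmap n ` (cball 0 1 - {1}) \<subseteq> U" if "n \<ge> Suc N" for n
  proof -
    have "n \<notin> missed_disks U"
      using N that by fastforce
    with that show ?thesis
      unfolding missed_disks_def by simp
  qed
  then show ?thesis
    unfolding eventually_sequentially by blast
qed

lemma continuous_map_vert_in_closed:
  fixes f :: "xpt \<Rightarrow> 'a::topological_space"
  assumes f: "continuous_map Xcrs euclidean f" and n: "n \<ge> 1"
    and "closed T" and "f ` qmap n ` ball 0 1 \<subseteq> T"
  shows "f (vert n) \<in> T"
proof -
  have "continuous_on (closure (ball 0 1)) (f \<circ> qmap n)"
    using continuous_map_compose[OF continuous_map_qmap[OF n] f] by simp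
  then have "(f \<circ> qmap n) ` closure (ball 0 1) \<subseteq> T"
    using assms(3,4) by (intro image_closure_subset) (auto simp: image_comp)
  moreover have "(1::complex) \<in> closure (ball 0 1)" "qmap n 1 = vert n"
    by (simp_all add: qmap_eq_vert)
  ultimately show ?thesis
    by (metis comp_apply image_subset_iff)
qed

lemma continuous_map_Xcrs_eventually_near_origin:
  assumes f: "continuous_map Xcrs euclideanreal f"
  shows "\<forall>\<^sub>F n in sequentially. dist (f (vert n)) (f None) \<le> 1"
proof -
  define U where "U = {y \<in> topspace Xcrs. f y \<in> ball (f None) 1}"
  have "openin Xcrs U"
    unfolding U_def by (rule openin_continuous_map_preimage[OF f]) simp
  moreover have "None \<in> U"
    unfolding U_def topspace_Xcrs Xpts_def by simp
  ultimately have "\<forall>\<^sub>F n in sequentially. n \<ge> 1 \<and> qmap n ` (cball 0 1 - {1}) \<subseteq> U"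
    by (intro eventually_conj eventually_disks_in_nbhd_origin eventually_ge_at_top)
  then show ?thesis
  proof (rule eventually_mono)
    fix n assume n: "n \<ge> 1 \<and> qmap n ` (cball 0 1 - {1}) \<subseteq> U"
    have "ball (0::complex) 1 \<subseteq> cball 0 1 - {1}"
      by auto
    with n have "f ` qmap n ` ball 0 1 \<subseteq> cball (f None) 1"
      unfolding U_def by (fastforce simp: dist_commute)
    with n have "f (vert n) \<in> cball (f None) 1"
      by (intro continuous_map_vert_in_closed[OF f]) auto
    then show "dist (f (vert n)) (f None) \<le> 1"
      by (simp add: dist_commute)
  qed
qed

lemma not_restriction_of_global_index: "\<not> restriction_of_global Xcrs (vert ` {1..}) index_section"
proof
  assume "restriction_of_global Xcrs (vert ` {1..}) index_section"
  then obtain f where f: "continuous_map Xcrs euclideanreal f"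
    and germ: "\<forall>a\<in>vert ` {1..}. same_germ Xcrs a f (index_section a)"
    unfolding restriction_of_global_def by blast
  have f_vert: "f (vert n) = real n" if "n \<ge> 1" for n
    using germ that unfolding same_germ_def index_section_def vert_def by force
  have "\<forall>\<^sub>F n in sequentially. real n > f None + 1"
    using filterlim_real_sequentially unfolding filterlim_at_top_dense by blast
  with continuous_map_Xcrs_eventually_near_origin[OF f] eventually_ge_at_top[of 1]
  have "\<forall>\<^sub>F n in sequentially. False"
    by eventually_elim (auto simp: f_vert dist_real_def)
  then show False
    by simp
qed

theorem mainTheorem9:
  shows "closedin Xcrs (vert ` {1..}) \<and>
    (\<exists>\<sigma>. inv_image_section Xcrs (vert ` {1..}) \<sigma> \<and>
          \<not> restriction_of_global Xcrs (vert ` {1..}) \<sigma>)"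
  using closedin_vertices inv_image_section_index not_restriction_of_global_index by blast

end
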